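(* Let $f=f(u)$ be smooth and suppose $\Sigma=\{u\in\mathbb{R}: f(u)=u\}$ is nonempty and finite, with smallest element $u_1^*$ and largest element $u_N^*$, and assume $f'(u_1^* )<1$ and $f'(u_N^* )<1$. Let $(\rho,u)$ be a classical solution of $(S_f)$ on $[0,T)$ with $\rho\ge0$. Then for all $t\in[0,T)$ and $x\in\mathbb{R}$, $$\min\{\inf u_0,u_1^*\}\le u(t,x)\le\max\{\sup u_0,u_N^*\}.$$ In particular, if $\Sigma=\{u^*\}$ with $f'(u^* )<1$, then $\min\{\inf u_0,u^*\}\le u(t,x)\le\max\{\sup u_0,u^*\}$.
   Context: When $f$ depends on $u$ only, system $(S_f)$ is: $\rho_t+(\rho f(u))_x=0$, $u_t+uu_x=\rho\,(f(u)-u)$ for $x\in\mathbb{R}$, $t>0$, with $\rho(0,x)=\rho_0(x)\ge0$, $u(0,x)=u_0(x)$, where $u_0$ is bounded. A classical solution on $[0,T)$ is a pair $\rho,u\in C^1([0,T)\times\mathbb{R})$ satisfying the equations pointwise and the initial data, such that $\rho,u,\rho_x,u_x$ are bounded on $[0,t]\times\mathbb{R}$ for every $t<T$. *)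

theory Defs
  imports "HOL-Analysis.Analysis"
begin

definition smooth_real :: "(real \<Rightarrow> real) \<Rightarrow> bool" where
  "smooth_real f \<longleftrightarrow> (\<forall>n x. ((deriv ^^ n) f) differentiable (at x))"

definition C1_strip ::
  "real \<Rightarrow> (real \<Rightarrow> real \<Rightarrow> real) \<Rightarrow> (real \<Rightarrow> real \<Rightarrow> real) \<Rightarrow> (real \<Rightarrow> real \<Rightarrow> real) \<Rightarrow> bool" where
  "C1_strip T w wt wx \<longleftrightarrow>
     continuous_on ({0..<T} \<times> UNIV) (\<lambda>p. w (fst p) (snd p)) \<and>
     continuous_on ({0..<T} \<times> UNIV) (\<lambda>p. wt (fst p) (snd p)) \<and>
     continuous_on ({0..<T} \<times> UNIV) (\<lambda>p. wx (fst p) (snd p)) \<and>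
     (\<forall>t x. 0 \<le> t \<and> t < T \<longrightarrow>
        ((\<lambda>p. w (fst p) (snd p)) has_derivative (\<lambda>h. fst h * wt t x + snd h * wx t x))
          (at (t, x) within {0..<T} \<times> UNIV))"

text \<open>Classical solution of (S_f) on [0,T):
  rho_t + (rho f(u))_x = 0,  u_t + u u_x = rho (f(u) - u),  with initial data.\<close>
definition classical_solution ::
  "(real \<Rightarrow> real) \<Rightarrow> real \<Rightarrow> (real \<Rightarrow> real) \<Rightarrow> (real \<Rightarrow> real) \<Rightarrow>
   (real \<Rightarrow> real \<Rightarrow> real) \<Rightarrow> (real \<Rightarrow> real \<Rightarrow> real) \<Rightarrow> bool" where
  "classical_solution f T rho0 u0 rho u \<longleftrightarrow>
     (\<exists>rt rx ut ux.
        C1_strip T rho rt rx \<and> C1_strip T u ut ux \<and>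
        (\<forall>t x. 0 \<le> t \<and> t < T \<longrightarrow>
           ((\<lambda>y. rho t y * f (u t y)) has_real_derivative (- rt t x)) (at x) \<and>
           ut t x + u t x * ux t x = rho t x * (f (u t x) - u t x)) \<and>
        (\<forall>x. rho 0 x = rho0 x \<and> u 0 x = u0 x) \<and>
        (\<forall>s. 0 \<le> s \<and> s < T \<longrightarrow>
           bounded ((\<lambda>p. rho (fst p) (snd p)) ` ({0..s} \<times> UNIV)) \<and>
           bounded ((\<lambda>p. u (fst p) (snd p)) ` ({0..s} \<times> UNIV)) \<and>
           bounded ((\<lambda>p. rx (fst p) (snd p)) ` ({0..s} \<times> UNIV)) \<and>
           bounded ((\<lambda>p. ux (fst p) (snd p)) ` ({0..s} \<times> UNIV))))"

end

theory Submission
  imports Defs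
begin

text \<open>Where u exceeds M = max (sup u0) u_N, the source term rho (f u - u) is nonpositive, because
  f' < 1 at the largest fixed point u_N forces f v < v for all v > u_N, and rho \<ge> 0. So u satisfies
  the transport inequality u_t + u u_x \<le> 0 there, and a maximum principle gives u \<le> M: if u exceeded
  M somewhere, the penalized function u - \<delta> sqrt (1 + x^2) - \<epsilon> t would attain a maximum above M
  at some point with t > 0 of a large box, yet it strictly increases along the backward characteristic
  through that point. The lower bound follows by applying the same argument to -u(t,-x).\<close>

lemma has_real_derivative_nonpos_at_left_max:
  fixes g :: "real \<Rightarrow> real"
  assumes der: "(g has_real_derivative D) (at a within {a..b})" and "a < b"
    and le: "\<forall>s\<in>{a<..b}. g s \<le> g a"
  shows "D \<le> 0"
proof (rule ccontr)
  assume "\<not> D \<le> 0"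
  then obtain d where "0 < d" and inc: "\<forall>h>0. a + h \<in> {a..b} \<longrightarrow> h < d \<longrightarrow> g a < g (a + h)"
    using has_real_derivative_pos_inc_right[OF der] by force
  define h where "h = min d (b - a) / 2"
  have "0 < h" "h < d" "a + h \<in> {a<..b}"
    using \<open>0 < d\<close> \<open>a < b\<close> by (auto simp: h_def min_def field_simps)
  then show False
    using inc le by force
qed

lemma has_derivative_nonpos_at_segment_max:
  fixes F :: "'a::real_normed_vector \<Rightarrow> real"
  assumes der: "(F has_derivative F') (at p within S)" and "0 < \<eta>"
    and seg: "\<forall>s\<in>{0..\<eta>}. p + s *\<^sub>R v \<in> S"
    and le: "\<forall>s\<in>{0..\<eta>}. F (p + s *\<^sub>R v) \<le> F p"
  shows "F' v \<le> 0"
proof -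
  interpret F': bounded_linear F'
    using der by (rule has_derivative_bounded_linear)
  let ?\<gamma> = "\<lambda>s. p + s *\<^sub>R v"
  have "(?\<gamma> has_derivative (\<lambda>s. s *\<^sub>R v)) (at 0 within {0..\<eta>})"
    by (auto intro!: derivative_eq_intros)
  moreover have "(F has_derivative F') (at (?\<gamma> 0) within ?\<gamma> ` {0..\<eta>})"
    using seg by (auto intro!: has_derivative_subset[OF der])
  ultimately have "(F \<circ> ?\<gamma> has_derivative F' \<circ> (\<lambda>s. s *\<^sub>R v)) (at 0 within {0..\<eta>})"
    by (rule diff_chain_within)
  then have "(F \<circ> ?\<gamma> has_real_derivative F' v) (at 0 within {0..\<eta>})"
    by (simp add: has_field_derivative_def o_def F'.scaleR mult_commute_abs)
  then show ?thesis
    using has_real_derivative_nonpos_at_left_max \<open>0 < \<eta>\<close> le by fastforce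
qed

lemma negative_right_of_last_zero:
  fixes g :: "real \<Rightarrow> real"
  assumes cont: "continuous_on UNIV g" and der: "(g has_real_derivative D) (at a)" and "D < 0"
    and "g a = 0" and nz: "\<forall>v>a. g v \<noteq> 0" and "a < w"
  shows "g w < 0"
proof (rule ccontr)
  assume "\<not> g w < 0"
  obtain d where "0 < d" and dec: "\<forall>h>0. h < d \<longrightarrow> g (a + h) < g a"
    using DERIV_neg_dec_right[OF der \<open>D < 0\<close>] by blast
  define h where "h = min d (w - a) / 2"
  have "0 < h" "h < d" "a + h \<le> w"
    using \<open>0 < d\<close> \<open>a < w\<close> by (auto simp: h_def min_def field_simps)
  with dec \<open>g a = 0\<close> have "g (a + h) < 0"
    by simp
  then obtain z where "a + h \<le> z" "g z = 0"
    using IVT'[of g "a + h" 0 w] \<open>\<not> g w < 0\<close> \<open>a + h \<le> w\<close> continuous_on_subset[OF cont]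
    by force
  then show False
    using nz \<open>0 < h\<close> by force
qed

lemma positive_left_of_first_zero:
  fixes g :: "real \<Rightarrow> real"
  assumes cont: "continuous_on UNIV g" and der: "(g has_real_derivative D) (at a)" and "D < 0"
    and "g a = 0" and nz: "\<forall>v<a. g v \<noteq> 0" and "w < a"
  shows "0 < g w"
proof -
  have "continuous_on UNIV (\<lambda>y. - g (- y))"
    by (intro continuous_intros continuous_on_compose2[OF cont]) auto
  moreover have "((\<lambda>y. - g (- y)) has_real_derivative D) (at (- a))"
    using der by (auto intro!: derivative_eq_intros DERIV_chain2[where f = g])
  moreover have "\<forall>v>- a. - g (- v) \<noteq> 0"
    using nz by force
  ultimately have "- g (- (- w)) < 0"
    using negative_right_of_last_zero[of "\<lambda>y. - g (- y)" D "- a" "- w"] assms by simp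
  then show ?thesis by simp
qed

text \<open>The \<delta>-term confines a maximum to a bounded range of x, the \<epsilon>-term makes the transport
  inequality strict.\<close>

definition penalized :: "(real \<Rightarrow> real \<Rightarrow> real) \<Rightarrow> real \<Rightarrow> real \<Rightarrow> real \<times> real \<Rightarrow> real" where
  "penalized w \<delta> \<epsilon> p = w (fst p) (snd p) - \<delta> * sqrt (1 + (snd p)\<^sup>2) - \<epsilon> * fst p"

lemma abs_le_sqrt_one_plus_square: "\<bar>x\<bar> \<le> sqrt (1 + x\<^sup>2)"
proof -
  have "sqrt (x\<^sup>2) \<le> sqrt (1 + x\<^sup>2)"
    by (rule real_sqrt_le_mono) simp
  then show ?thesis
    by simp
qed

lemma penalized_le:
  assumes "0 \<le> \<delta>" "0 \<le> \<epsilon>" "0 \<le> t"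
  shows "penalized w \<delta> \<epsilon> (t, x) \<le> w t x - \<delta> * \<bar>x\<bar>"
proof -
  have "\<delta> * \<bar>x\<bar> \<le> \<delta> * sqrt (1 + x\<^sup>2)"
    using abs_le_sqrt_one_plus_square assms(1) by (rule mult_left_mono)
  moreover have "0 \<le> \<epsilon> * t"
    using assms by simp
  ultimately show ?thesis
    by (simp add: penalized_def)
qed

lemma penalized_has_derivative:
  assumes "((\<lambda>p. w (fst p) (snd p)) has_derivative (\<lambda>h. fst h * a + snd h * b)) (at (t, x) within S)"
  shows "(penalized w \<delta> \<epsilon> has_derivative
           (\<lambda>h. fst h * (a - \<epsilon>) + snd h * (b - \<delta> * (x / sqrt (1 + x\<^sup>2))))) (at (t, x) within S)"
proof -
  have "((\<lambda>p::real \<times> real. sqrt (1 + (snd p)\<^sup>2)) has_derivative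
          (\<lambda>h. inverse (sqrt (1 + x\<^sup>2)) / 2 * (2 * x * snd h))) (at (t, x) within S)"
    by (rule derivative_eq_intros refl | simp add: add_pos_nonneg)+ (auto simp: fun_eq_iff)
  from has_derivative_diff[OF has_derivative_diff[OF assms has_derivative_mult_right[OF this]]
      has_derivative_mult_right[OF has_derivative_fst[OF has_derivative_ident]]]
  show ?thesis
    unfolding penalized_def by (rule has_derivative_eq_rhs) (simp add: fun_eq_iff field_simps)
qed

lemma penalized_increases_backward_along_characteristic:
  assumes der: "((\<lambda>p. w (fst p) (snd p)) has_derivative (\<lambda>h. fst h * a + snd h * b)) (at (t, x) within S)"
    and transport: "a + w t x * b \<le> 0" and "0 \<le> \<delta>" and small: "\<bar>w t x\<bar> * \<delta> < \<epsilon>"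
    and "0 < \<eta>" and seg: "\<forall>s\<in>{0..\<eta>}. (t - s, x - s * w t x) \<in> S"
  shows "\<exists>s\<in>{0..\<eta>}. penalized w \<delta> \<epsilon> (t, x) < penalized w \<delta> \<epsilon> (t - s, x - s * w t x)"
proof (rule ccontr)
  assume no_increase: "\<not> ?thesis"
  define c where "c = w t x"
  define q where "q = x / sqrt (1 + x\<^sup>2)"
  have seg': "(t, x) + s *\<^sub>R (- 1, - c) = (t - s, x - s * c)" for s
    by (simp add: algebra_simps)
  have "- (a - \<epsilon>) - c * (b - \<delta> * q) \<le> 0"
    using has_derivative_nonpos_at_segment_max[OF penalized_has_derivative[OF der] \<open>0 < \<eta>\<close>,
        of "(- 1, - c)"] seg no_increase
    unfolding seg' c_def q_def by (force simp: not_less)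
  moreover have "\<bar>q\<bar> \<le> 1"
    using abs_le_sqrt_one_plus_square[of x]
    by (simp add: q_def abs_divide divide_le_eq_1 add_pos_nonneg)
  then have "\<bar>c * \<delta> * q\<bar> \<le> \<bar>c\<bar> * \<delta>"
    using \<open>0 \<le> \<delta>\<close> by (simp add: abs_mult mult_left_le)
  ultimately show False
    using transport small unfolding c_def by (simp add: algebra_simps)
qed

lemma penalty_parameters:
  assumes "M < w t0 x0" "0 \<le> t0" "0 < K"
  obtains \<delta> \<epsilon> where "0 < \<delta>" "K * \<delta> < \<epsilon>" "M < penalized w \<delta> \<epsilon> (t0, x0)"
proof
  define a where "a = w t0 x0 - M"
  define s0 where "s0 = sqrt (1 + x0\<^sup>2)"
  define \<epsilon> where "\<epsilon> = a / (2 * (t0 + 1))"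
  define \<delta> where "\<delta> = min (\<epsilon> / (2 * K)) (a / (4 * s0))"
  have "0 < a" "1 \<le> s0"
    using assms by (simp_all add: a_def s0_def)
  then have "0 < \<epsilon>" "\<epsilon> * t0 < a / 2"
    using assms by (auto simp: \<epsilon>_def field_simps)
  then show "0 < \<delta>"
    using \<open>0 < a\<close> \<open>1 \<le> s0\<close> \<open>0 < K\<close> by (simp add: \<delta>_def)
  have "K * \<delta> \<le> K * (\<epsilon> / (2 * K))"
    using \<open>0 < K\<close> by (intro mult_left_mono) (auto simp: \<delta>_def)
  then show "K * \<delta> < \<epsilon>"
    using \<open>0 < K\<close> \<open>0 < \<epsilon>\<close> by simp
  have "\<delta> * s0 \<le> a / 4"
    using \<open>0 < a\<close> \<open>1 \<le> s0\<close> \<open>0 < \<epsilon>\<close> \<open>0 < K\<close> by (auto simp: \<delta>_def field_simps min_def)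
  with \<open>\<epsilon> * t0 < a / 2\<close> \<open>0 < a\<close> show "M < penalized w \<delta> \<epsilon> (t0, x0)"
    by (simp add: penalized_def a_def s0_def)
qed

lemma penalized_attains_max_in_box:
  fixes w :: "real \<Rightarrow> real \<Rightarrow> real"
  assumes cont: "continuous_on ({0..t0} \<times> UNIV) (\<lambda>p. w (fst p) (snd p))"
    and K: "\<And>t x. 0 \<le> t \<Longrightarrow> t \<le> t0 \<Longrightarrow> \<bar>w t x\<bar> \<le> K"
    and "0 < \<delta>" "0 \<le> \<epsilon>" "0 \<le> t0" and start: "M < penalized w \<delta> \<epsilon> (t0, x0)"
  shows "\<exists>t1 x1 R. 0 \<le> t1 \<and> t1 \<le> t0 \<and> \<bar>x1\<bar> < R \<and> M < penalized w \<delta> \<epsilon> (t1, x1) \<and>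
    (\<forall>q\<in>{0..t0} \<times> {-R..R}. penalized w \<delta> \<epsilon> q \<le> penalized w \<delta> \<epsilon> (t1, x1))"
proof -
  define V where "V = penalized w \<delta> \<epsilon>"
  define R where "R = \<bar>x0\<bar> + (\<bar>K\<bar> + \<bar>M\<bar> + 1) / \<delta>"
  define B where "B = {0..t0} \<times> {-R..R}"
  have "\<bar>x0\<bar> \<le> R" "\<bar>K\<bar> + \<bar>M\<bar> + 1 \<le> \<delta> * R"
    using \<open>0 < \<delta>\<close> by (auto simp: R_def field_simps)
  have far: "V (t, x) < M" if "0 \<le> t" "t \<le> t0" "R \<le> \<bar>x\<bar>" for t x
  proof -
    have "\<delta> * R \<le> \<delta> * \<bar>x\<bar>"
      using that \<open>0 < \<delta>\<close> by simp
    then show ?thesis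
      using penalized_le[of \<delta> \<epsilon> t w x] K[OF that(1,2), of x] \<open>\<bar>K\<bar> + \<bar>M\<bar> + 1 \<le> \<delta> * R\<close>
        \<open>0 < \<delta>\<close> \<open>0 \<le> \<epsilon>\<close> that(1) unfolding V_def by linarith
  qed
  have "continuous_on B V"
    using cont unfolding V_def penalized_def B_def
    by (intro continuous_intros continuous_on_subset[OF cont]) auto
  moreover have "(t0, x0) \<in> B"
    using \<open>0 \<le> t0\<close> \<open>\<bar>x0\<bar> \<le> R\<close> by (auto simp: B_def)
  ultimately obtain t1 x1 where "(t1, x1) \<in> B" and max: "\<And>q. q \<in> B \<Longrightarrow> V q \<le> V (t1, x1)"
    using continuous_attains_sup[of B V] compact_Times[of "{0..t0}" "{-R..R}"]
    unfolding B_def by fastforce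
  then have t1: "0 \<le> t1" "t1 \<le> t0"
    by (auto simp: B_def)
  have "M < V (t1, x1)"
    using max[OF \<open>(t0, x0) \<in> B\<close>] start unfolding V_def by simp
  have "\<bar>x1\<bar> < R"
    using far[OF t1, of x1] \<open>M < V (t1, x1)\<close> by (meson not_less less_asym)
  with t1 \<open>M < V (t1, x1)\<close> max show ?thesis
    unfolding V_def B_def by blast
qed

lemma backward_characteristic_in_box:
  fixes s t0 t1 x1 R c :: real
  assumes "0 \<le> s" "s \<le> min t1 ((R - \<bar>x1\<bar>) / (\<bar>c\<bar> + 1))" "t1 \<le> t0"
  shows "(t1 - s, x1 - s * c) \<in> {0..t0} \<times> {-R..R}"
proof -
  have "0 < \<bar>c\<bar> + 1"
    using abs_ge_zero[of c] by linarith
  moreover have "s \<le> (R - \<bar>x1\<bar>) / (\<bar>c\<bar> + 1)"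
    using assms(2) by simp
  ultimately have "s * (\<bar>c\<bar> + 1) \<le> R - \<bar>x1\<bar>"
    by (simp add: pos_le_divide_eq)
  moreover have "\<bar>s * c\<bar> \<le> s * (\<bar>c\<bar> + 1)"
    using assms by (simp add: abs_mult algebra_simps)
  ultimately have "\<bar>x1 - s * c\<bar> \<le> R"
    by linarith
  moreover have "s \<le> t1"
    using assms(2) by simp
  ultimately show ?thesis
    using assms(1,3) by (simp add: abs_le_iff)
qed

lemma transport_max_principle:
  fixes u ut ux :: "real \<Rightarrow> real \<Rightarrow> real"
  assumes C1: "C1_strip T u ut ux"
    and bdd: "\<forall>s. 0 \<le> s \<and> s < T \<longrightarrow> bounded ((\<lambda>p. u (fst p) (snd p)) ` ({0..s} \<times> UNIV))"
    and init: "\<forall>x. u 0 x \<le> M"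
    and transport: "\<forall>t x. 0 \<le> t \<and> t < T \<and> M < u t x \<longrightarrow> ut t x + u t x * ux t x \<le> 0"
    and t0: "0 \<le> t0" "t0 < T"
  shows "u t0 x0 \<le> M"
proof (rule ccontr)
  assume "\<not> u t0 x0 \<le> M"
  obtain K where "0 < K" and K: "\<And>t x. 0 \<le> t \<Longrightarrow> t \<le> t0 \<Longrightarrow> \<bar>u t x\<bar> \<le> K"
  proof -
    obtain K where "0 < K" "\<forall>y\<in>(\<lambda>p. u (fst p) (snd p)) ` ({0..t0} \<times> UNIV). norm y \<le> K"
      using bdd t0 unfolding bounded_pos by blast
    then show thesis
      by (intro that[of K]) force+
  qed
  obtain \<delta> \<epsilon> where "0 < \<delta>" "K * \<delta> < \<epsilon>" and start: "M < penalized u \<delta> \<epsilon> (t0, x0)"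
    using penalty_parameters \<open>\<not> u t0 x0 \<le> M\<close> t0(1) \<open>0 < K\<close> by (metis not_le)
  have "0 \<le> \<epsilon>"
    using \<open>0 < K\<close> \<open>0 < \<delta>\<close> \<open>K * \<delta> < \<epsilon>\<close> by (smt (verit) mult_pos_pos)
  have "{0..t0} \<times> UNIV \<subseteq> {0..<T} \<times> (UNIV :: real set)"
    using t0 by auto
  with C1 have cont: "continuous_on ({0..t0} \<times> UNIV) (\<lambda>p. u (fst p) (snd p))"
    unfolding C1_strip_def by (blast intro: continuous_on_subset)
  obtain t1 x1 R where t1: "0 \<le> t1" "t1 \<le> t0" and "\<bar>x1\<bar> < R"
    and "M < penalized u \<delta> \<epsilon> (t1, x1)"
    and max: "\<forall>q\<in>{0..t0} \<times> {-R..R}. penalized u \<delta> \<epsilon> q \<le> penalized u \<delta> \<epsilon> (t1, x1)"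
    using penalized_attains_max_in_box[OF cont K \<open>0 < \<delta>\<close> \<open>0 \<le> \<epsilon>\<close> t0(1) start] by blast
  define c where "c = u t1 x1"
  have "M < c"
    using penalized_le[of \<delta> \<epsilon> t1 u x1] \<open>M < penalized u \<delta> \<epsilon> (t1, x1)\<close> \<open>0 < \<delta>\<close> \<open>0 \<le> \<epsilon>\<close> t1
    unfolding c_def by (smt (verit) mult_nonneg_nonneg abs_ge_zero)
  have "0 < t1"
  proof (rule ccontr)
    assume "\<not> 0 < t1"
    then have "t1 = 0"
      using t1 by simp
    then show False
      using \<open>M < c\<close> init unfolding c_def by (metis not_le)
  qed
  define \<eta> where "\<eta> = min t1 ((R - \<bar>x1\<bar>) / (\<bar>c\<bar> + 1))"
  have "0 < \<eta>"
    using \<open>0 < t1\<close> \<open>\<bar>x1\<bar> < R\<close> by (simp add: \<eta>_def)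
  have seg: "(t1 - s, x1 - s * c) \<in> {0..t0} \<times> {-R..R}" if "s \<in> {0..\<eta>}" for s
    using that t1(2) unfolding \<eta>_def by (intro backward_characteristic_in_box) auto
  have der: "((\<lambda>p. u (fst p) (snd p)) has_derivative (\<lambda>h. fst h * ut t1 x1 + snd h * ux t1 x1))
      (at (t1, x1) within {0..<T} \<times> UNIV)"
    using C1 t1 t0 unfolding C1_strip_def by simp
  have "ut t1 x1 + u t1 x1 * ux t1 x1 \<le> 0"
    using transport t1 t0 \<open>M < c\<close> unfolding c_def by simp
  moreover have "\<bar>u t1 x1\<bar> * \<delta> < \<epsilon>"
    using K[OF t1, of x1] \<open>0 < \<delta>\<close> \<open>K * \<delta> < \<epsilon>\<close> by (smt (verit) mult_right_mono)
  moreover have "\<forall>s\<in>{0..\<eta>}. (t1 - s, x1 - s * u t1 x1) \<in> {0..<T} \<times> UNIV"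
  proof
    fix s
    assume "s \<in> {0..\<eta>}"
    from seg[OF this] t0(2) show "(t1 - s, x1 - s * u t1 x1) \<in> {0..<T} \<times> UNIV"
      unfolding c_def by simp
  qed
  ultimately have "\<exists>s\<in>{0..\<eta>}. penalized u \<delta> \<epsilon> (t1, x1) < penalized u \<delta> \<epsilon> (t1 - s, x1 - s * c)"
    unfolding c_def
    by (rule penalized_increases_backward_along_characteristic[OF der _ less_imp_le[OF \<open>0 < \<delta>\<close>] _ \<open>0 < \<eta>\<close>])
  then obtain s where s: "s \<in> {0..\<eta>}"
    and increase: "penalized u \<delta> \<epsilon> (t1, x1) < penalized u \<delta> \<epsilon> (t1 - s, x1 - s * c)" ..
  have "penalized u \<delta> \<epsilon> (t1 - s, x1 - s * c) \<le> penalized u \<delta> \<epsilon> (t1, x1)"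
    using max seg[OF s] by blast
  with increase show False
    by simp
qed

lemma C1_strip_reflect:
  assumes "C1_strip T u ut ux"
  shows "C1_strip T (\<lambda>t x. - u t (- x)) (\<lambda>t x. - ut t (- x)) (\<lambda>t x. ux t (- x))"
proof -
  let ?S = "{0..<T} \<times> (UNIV :: real set)"
  define r where "r = (\<lambda>p :: real \<times> real. (fst p, - snd p))"
  have r_strip: "r ` ?S \<subseteq> ?S"
    by (auto simp: r_def)
  have "continuous_on ?S r"
    unfolding r_def by (intro continuous_intros)
  have cont_reflect: "continuous_on ?S (\<lambda>p. w (fst p) (- snd p))"
    if "continuous_on ?S (\<lambda>p. w (fst p) (snd p))" for w :: "real \<Rightarrow> real \<Rightarrow> real"
    using continuous_on_compose[OF \<open>continuous_on ?S r\<close> continuous_on_subset[OF that r_strip]]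
    by (simp add: r_def o_def)
  have "((\<lambda>p. - u (fst p) (- snd p)) has_derivative (\<lambda>h. fst h * - ut t (- x) + snd h * ux t (- x)))
          (at (t, x) within ?S)" if "0 \<le> t" "t < T" for t x
  proof -
    have "(r has_derivative (\<lambda>h. (fst h, - snd h))) (at (t, x) within ?S)"
      unfolding r_def by (auto intro!: derivative_eq_intros)
    moreover have "((\<lambda>p. u (fst p) (snd p)) has_derivative (\<lambda>h. fst h * ut t (- x) + snd h * ux t (- x)))
          (at (t, - x) within ?S)"
      using assms that unfolding C1_strip_def by blast
    then have "((\<lambda>p. u (fst p) (snd p)) has_derivative (\<lambda>h. fst h * ut t (- x) + snd h * ux t (- x)))
          (at (r (t, x)) within r ` ?S)"
      using has_derivative_subset[OF _ r_strip] by (simp add: r_def)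
    ultimately have "((\<lambda>p. u (fst p) (snd p)) \<circ> r has_derivative
          (\<lambda>h. fst h * ut t (- x) + snd h * ux t (- x)) \<circ> (\<lambda>h. (fst h, - snd h))) (at (t, x) within ?S)"
      by (rule diff_chain_within)
    from has_derivative_minus[OF this] show ?thesis
      by (simp add: r_def o_def)
  qed
  with assms show ?thesis
    unfolding C1_strip_def by (auto intro!: cont_reflect continuous_intros)
qed

lemma bounded_strip_reflect:
  fixes u :: "real \<Rightarrow> real \<Rightarrow> real"
  assumes "bounded ((\<lambda>p. u (fst p) (snd p)) ` ({0..s} \<times> UNIV))"
  shows "bounded ((\<lambda>p. - u (fst p) (- snd p)) ` ({0..s} \<times> UNIV))"
proof -
  have "(\<lambda>p. - u (fst p) (- snd p)) ` ({0..s} \<times> UNIV) = uminus ` (\<lambda>p. u (fst p) (snd p)) ` ({0..s} \<times> UNIV)"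
    by (force simp: image_iff intro: exI[of _ "- x" for x])
  with assms show ?thesis
    by simp
qed

lemma transport_min_principle:
  fixes u ut ux :: "real \<Rightarrow> real \<Rightarrow> real"
  assumes C1: "C1_strip T u ut ux"
    and bdd: "\<forall>s. 0 \<le> s \<and> s < T \<longrightarrow> bounded ((\<lambda>p. u (fst p) (snd p)) ` ({0..s} \<times> UNIV))"
    and init: "\<forall>x. m \<le> u 0 x"
    and transport: "\<forall>t x. 0 \<le> t \<and> t < T \<and> u t x < m \<longrightarrow> 0 \<le> ut t x + u t x * ux t x"
    and t0: "0 \<le> t0" "t0 < T"
  shows "m \<le> u t0 x0"
proof -
  have "- u t0 (- (- x0)) \<le> - m"
    using C1_strip_reflect[OF C1] _ _ _ t0
  proof (rule transport_max_principle)
    show "\<forall>s. 0 \<le> s \<and> s < T \<longrightarrow> bounded ((\<lambda>p. - u (fst p) (- snd p)) ` ({0..s} \<times> UNIV))"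
      using bdd bounded_strip_reflect by blast
  qed (use init transport in \<open>(force simp: algebra_simps)+\<close>)
  then show ?thesis
    by simp
qed

lemma fixed_point_gap_has_derivative:
  fixes f :: "real \<Rightarrow> real"
  assumes "\<And>x. f differentiable at x"
  shows "continuous_on UNIV (\<lambda>v. f v - v)"
    and "((\<lambda>v. f v - v) has_real_derivative deriv f a - 1) (at a)"
proof -
  have "continuous_on UNIV f"
    using assms by (intro continuous_at_imp_continuous_on ballI differentiable_imp_continuous_within)
  then show "continuous_on UNIV (\<lambda>v. f v - v)"
    by (intro continuous_intros)
  show "((\<lambda>v. f v - v) has_real_derivative deriv f a - 1) (at a)"
    using assms[of a] by (intro derivative_eq_intros) (auto simp: DERIV_deriv_iff_real_differentiable)
qed

lemma below_diagonal_right_of_largest_fixed_point: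
  fixes f :: "real \<Rightarrow> real"
  assumes diff: "\<And>x. f differentiable at x" and fin: "finite {v. f v = v}" and ne: "{v. f v = v} \<noteq> {}"
    and "deriv f (Max {v. f v = v}) < 1" and "Max {v. f v = v} < v"
  shows "f v < v"
proof -
  define a where "a = Max {v. f v = v}"
  have "f a - a = 0"
    using Max_in[OF fin ne] unfolding a_def by simp
  moreover have "\<forall>w>a. f w - w \<noteq> 0"
    using Max_ge[OF fin] unfolding a_def by fastforce
  moreover have "deriv f a - 1 < 0" "a < v"
    using assms(4,5) unfolding a_def by simp_all
  ultimately have "f v - v < 0"
    by (intro negative_right_of_last_zero[OF fixed_point_gap_has_derivative[OF diff]])
  then show ?thesis
    by simp
qed

lemma above_diagonal_left_of_smallest_fixed_point:
  fixes f :: "real \<Rightarrow> real"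
  assumes diff: "\<And>x. f differentiable at x" and fin: "finite {v. f v = v}" and ne: "{v. f v = v} \<noteq> {}"
    and "deriv f (Min {v. f v = v}) < 1" and "v < Min {v. f v = v}"
  shows "v < f v"
proof -
  define a where "a = Min {v. f v = v}"
  have "f a - a = 0"
    using Min_in[OF fin ne] unfolding a_def by simp
  moreover have "\<forall>w<a. f w - w \<noteq> 0"
    using Min_le[OF fin] unfolding a_def by fastforce
  moreover have "deriv f a - 1 < 0" "v < a"
    using assms(4,5) unfolding a_def by simp_all
  ultimately have "0 < f v - v"
    by (intro positive_left_of_first_zero[OF fixed_point_gap_has_derivative[OF diff]])
  then show ?thesis
    by simp
qed

lemma classical_solution_le:
  assumes sol: "classical_solution f T rho0 u0 rho u"
    and rho_nonneg: "\<forall>t x. 0 \<le> t \<and> t < T \<longrightarrow> rho t x \<ge> 0"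
    and init: "\<forall>x. u0 x \<le> M" and below_diagonal: "\<forall>v>M. f v \<le> v"
    and "0 \<le> t" "t < T"
  shows "u t x \<le> M"
proof -
  obtain rt rx ut ux where C1: "C1_strip T u ut ux"
    and eq: "\<forall>t x. 0 \<le> t \<and> t < T \<longrightarrow> ut t x + u t x * ux t x = rho t x * (f (u t x) - u t x)"
    and "\<forall>x. u 0 x = u0 x"
    and "\<forall>s. 0 \<le> s \<and> s < T \<longrightarrow> bounded ((\<lambda>p. u (fst p) (snd p)) ` ({0..s} \<times> UNIV))"
    using sol unfolding classical_solution_def by blast
  moreover have "\<forall>t x. 0 \<le> t \<and> t < T \<and> M < u t x \<longrightarrow> ut t x + u t x * ux t x \<le> 0"
    using eq rho_nonneg below_diagonal by (simp add: mult_nonneg_nonpos)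
  ultimately show ?thesis
    using transport_max_principle[OF C1] init \<open>0 \<le> t\<close> \<open>t < T\<close> by simp
qed

lemma classical_solution_ge:
  assumes sol: "classical_solution f T rho0 u0 rho u"
    and rho_nonneg: "\<forall>t x. 0 \<le> t \<and> t < T \<longrightarrow> rho t x \<ge> 0"
    and init: "\<forall>x. m \<le> u0 x" and above_diagonal: "\<forall>v<m. v \<le> f v"
    and "0 \<le> t" "t < T"
  shows "m \<le> u t x"
proof -
  obtain rt rx ut ux where C1: "C1_strip T u ut ux"
    and eq: "\<forall>t x. 0 \<le> t \<and> t < T \<longrightarrow> ut t x + u t x * ux t x = rho t x * (f (u t x) - u t x)"
    and "\<forall>x. u 0 x = u0 x"
    and "\<forall>s. 0 \<le> s \<and> s < T \<longrightarrow> bounded ((\<lambda>p. u (fst p) (snd p)) ` ({0..s} \<times> UNIV))"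
    using sol unfolding classical_solution_def by blast
  moreover have "\<forall>t x. 0 \<le> t \<and> t < T \<and> u t x < m \<longrightarrow> 0 \<le> ut t x + u t x * ux t x"
    using eq rho_nonneg above_diagonal by simp
  ultimately show ?thesis
    using transport_min_principle[OF C1] init \<open>0 \<le> t\<close> \<open>t < T\<close> by simp
qed

lemma classical_solution_between:
  assumes sol: "classical_solution f T rho0 u0 rho u"
    and rho_nonneg: "\<forall>t x. 0 \<le> t \<and> t < T \<longrightarrow> rho t x \<ge> 0" and u0_bdd: "bounded (range u0)"
    and above: "\<forall>v<a. v \<le> f v" and below: "\<forall>v>b. f v \<le> v"
    and t: "0 \<le> t" "t < T"
  shows "min (Inf (range u0)) a \<le> u t x \<and> u t x \<le> max (Sup (range u0)) b"
proof
  have u0_bounds: "Inf (range u0) \<le> u0 y" "u0 y \<le> Sup (range u0)" for y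
    using u0_bdd by (auto intro: cInf_lower cSup_upper bounded_imp_bdd_below bounded_imp_bdd_above)
  show "min (Inf (range u0)) a \<le> u t x"
    by (rule classical_solution_ge[OF sol rho_nonneg _ _ t])
      (simp_all add: above u0_bounds(1) min.coboundedI1)
  show "u t x \<le> max (Sup (range u0)) b"
    by (rule classical_solution_le[OF sol rho_nonneg _ _ t])
      (simp_all add: below u0_bounds(2) max.coboundedI1)
qed

theorem mainTheorem5:
  fixes f :: "real \<Rightarrow> real" and T :: real
    and rho0 u0 :: "real \<Rightarrow> real" and rho u :: "real \<Rightarrow> real \<Rightarrow> real"
  assumes smooth: "smooth_real f"
    and fin: "finite {v. f v = v}" and ne: "{v. f v = v} \<noteq> {}"
    and d1: "deriv f (Min {v. f v = v}) < 1"
    and dN: "deriv f (Max {v. f v = v}) < 1"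
    and rho0_nonneg: "\<forall>x. rho0 x \<ge> 0"
    and u0_bdd: "bounded (range u0)"
    and sol: "classical_solution f T rho0 u0 rho u"
    and rho_nonneg: "\<forall>t x. 0 \<le> t \<and> t < T \<longrightarrow> rho t x \<ge> 0"
  shows "(\<forall>t x. 0 \<le> t \<and> t < T \<longrightarrow>
            min (Inf (range u0)) (Min {v. f v = v}) \<le> u t x \<and>
            u t x \<le> max (Sup (range u0)) (Max {v. f v = v})) \<and>
         (\<forall>us. {v. f v = v} = {us} \<and> deriv f us < 1 \<longrightarrow>
           (\<forall>t x. 0 \<le> t \<and> t < T \<longrightarrow>
              min (Inf (range u0)) us \<le> u t x \<and> u t x \<le> max (Sup (range u0)) us))"
proof -
  have diff: "\<And>x. f differentiable at x"
    using smooth unfolding smooth_real_def by (metis funpow_0)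
  have "\<forall>v<Min {v. f v = v}. v \<le> f v" "\<forall>v>Max {v. f v = v}. f v \<le> v"
    using above_diagonal_left_of_smallest_fixed_point[OF diff fin ne d1]
      below_diagonal_right_of_largest_fixed_point[OF diff fin ne dN] by (simp_all add: less_imp_le)
  note bounds = classical_solution_between[OF sol rho_nonneg u0_bdd this]
  show ?thesis
  proof (rule conjI; intro allI impI)
    fix t x
    assume "0 \<le> t \<and> t < T"
    then show "min (Inf (range u0)) (Min {v. f v = v}) \<le> u t x \<and>
        u t x \<le> max (Sup (range u0)) (Max {v. f v = v})"
      using bounds[of t x] by simp
  next
    fix us t x
    assume "{v. f v = v} = {us} \<and> deriv f us < 1" and "0 \<le> t \<and> t < T"
    then show "min (Inf (range u0)) us \<le> u t x \<and> u t x \<le> max (Sup (range u0)) us"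
      using bounds[of t x] by simp
  qed
qed

end
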